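(* Let $\mathcal{X},\mathcal{Y},\mathcal{Z}$ be sets, let $\mathcal{G}$ be a measurable space of maps $g:\mathcal{X}\to\mathcal{Z}$ (representations), let $\mathcal{H}$ be a set of maps $h:\mathcal{Z}\to\mathbb{R}$, and let $\ell$ be a real-valued loss function. Fix $T$ tasks with arbitrary datasets $\mathcal{S}_t=((x_{t,1},y_{t,1}),\dots,(x_{t,m_t},y_{t,m_t}))$, $t=1,\dots,T$, and run the EWA-LL algorithm (described in the context) with a prior $\pi_1$ on $\mathcal{G}$ and a parameter $\eta>0$. Assume that for every $t$ and every $g\in\mathcal{G}$, $\hat{L}_t(g)\in[0,C]$ and the within-task algorithm satisfies $\mathcal{R}_t(g)\le \beta(g,m_t)$. Then $$\frac{1}{T}\sum_{t=1}^T \mathbb{E}_{\hat g_t\sim\pi_t}\Big[\frac{1}{m_t}\sum_{i=1}^{m_t}\hat\ell_{t,i}\Big]\le \inf_{\rho}\Bigg\{\mathbb{E}_{g\sim\rho}\Bigg[\frac{1}{T}\sum_{t=1}^T\inf_{h_t\in\mathcal{H}}\frac{1}{m_t}\sum_{i=1}^{m_t}\ell\big(h_t\circ g(x_{t,i}),y_{t,i}\big)+\frac{1}{T}\sum_{t=1}^T\beta(g,m_t)\Bigg]+\frac{\eta C^2}{8}+\frac{\mathcal{K}(\rho,\pi_1)}{\eta T}\Bigg\},$$ where the infimum is over all probability measures $\rho$ on $\mathcal{G}$ and $\mathcal{K}(\rho,\pi_1)$ is the Kullback–Leibler divergence between $\rho$ and $\pi_1$.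
   Context: Within-task algorithm: for each task $t$ and each representation $g\in\mathcal{G}$, an online algorithm processes the points of $\mathcal{S}_t$ sequentially: at step $i$ it sees $x_{t,i}$, outputs a prediction $\hat y^g_{t,i}$ (depending only on $g$, $x_{t,1},\dots,x_{t,i}$, $y_{t,1},\dots,y_{t,i-1}$), then $y_{t,i}$ is revealed. Its average loss is $\hat{L}_t(g)=\frac{1}{m_t}\sum_{i=1}^{m_t}\ell(\hat y^g_{t,i},y_{t,i})$ (assumed measurable in $g$), and its within-task regret is $\mathcal{R}_t(g)=\hat{L}_t(g)-\inf_{h\in\mathcal{H}}\frac{1}{m_t}\sum_{i=1}^{m_t}\ell(h\circ g(x_{t,i}),y_{t,i})$. EWA-LL: given a probability measure $\pi_1$ on $\mathcal{G}$ and $\eta>0$, for $t=1,\dots,T$: (i) draw $\hat g_t\sim\pi_t$; (ii) run the within-task algorithm on $\mathcal{S}_t$ with representation $\hat g_t$, incurring losses $\hat\ell_{t,i}=\ell(\hat y^{\hat g_t}_{t,i},y_{t,i})$; (iii) set $\pi_{t+1}(\mathrm{d}g)=\exp(-\eta\hat L_t(g))\pi_t(\mathrm{d}g)/\int\exp(-\eta\hat L_t(\gamma))\pi_t(\mathrm{d}\gamma)$. The expectation $\mathbb{E}_{\hat g_t\sim\pi_t}$ is over the random draw of $\hat g_t$ at step (i). *)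

theory Defs
  imports "HOL-Probability.Probability"
begin

text \<open>A within-task online algorithm A: given representation g, the past examples
  (first i pairs) and the current input x_i, it outputs a real prediction.\<close>

definition within_loss ::
  "(real \<Rightarrow> 'y \<Rightarrow> real) \<Rightarrow> (('x \<Rightarrow> 'z) \<Rightarrow> ('x \<times> 'y) list \<Rightarrow> 'x \<Rightarrow> real)
   \<Rightarrow> ('x \<Rightarrow> 'z) \<Rightarrow> ('x \<times> 'y) list \<Rightarrow> real" where
  "within_loss loss A g S =
     (\<Sum>i<length S. loss (A g (take i S) (fst (S ! i))) (snd (S ! i))) / real (length S)"

text \<open>inf over h in H of the empirical loss of h o g (extended real: +infinity if H is empty).\<close>
definition best_in_class ::
  "(real \<Rightarrow> 'y \<Rightarrow> real) \<Rightarrow> ('z \<Rightarrow> real) set \<Rightarrow> ('x \<Rightarrow> 'z) \<Rightarrow> ('x \<times> 'y) list \<Rightarrow> ereal" where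
  "best_in_class loss H g S =
     (INF h\<in>H. ereal ((\<Sum>i<length S. loss (h (g (fst (S ! i)))) (snd (S ! i))) / real (length S)))"

definition within_regret ::
  "(real \<Rightarrow> 'y \<Rightarrow> real) \<Rightarrow> (('x \<Rightarrow> 'z) \<Rightarrow> ('x \<times> 'y) list \<Rightarrow> 'x \<Rightarrow> real)
   \<Rightarrow> ('z \<Rightarrow> real) set \<Rightarrow> ('x \<Rightarrow> 'z) \<Rightarrow> ('x \<times> 'y) list \<Rightarrow> ereal" where
  "within_regret loss A H g S = ereal (within_loss loss A g S) - best_in_class loss H g S"

text \<open>EWA-LL posteriors: ewa_post pi1 eta L t is pi_{t+1} (tasks indexed from 0),
  where L t g is the average within-task loss on task t with representation g.\<close>
fun ewa_post :: "'g measure \<Rightarrow> real \<Rightarrow> (nat \<Rightarrow> 'g \<Rightarrow> real) \<Rightarrow> nat \<Rightarrow> 'g measure" where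
  "ewa_post \<pi> \<eta> L 0 = \<pi>"
| "ewa_post \<pi> \<eta> L (Suc t) =
     density (ewa_post \<pi> \<eta> L t)
       (\<lambda>g. ennreal (exp (- \<eta> * L t g) /
                      (\<integral>\<gamma>. exp (- \<eta> * L t \<gamma>) \<partial>(ewa_post \<pi> \<eta> L t))))"

definition KL_div :: "'a measure \<Rightarrow> 'a measure \<Rightarrow> ennreal" where
  "KL_div \<rho> \<pi> =
     (if absolutely_continuous \<pi> \<rho> \<and> integrable \<rho> (entropy_density (exp 1) \<pi> \<rho>)
      then ennreal (KL_divergence (exp 1) \<pi> \<rho>) else \<infinity>)"

end

theory Submission
  imports Defs
begin

(*
  EWA-LL is the exponentially weighted average forecaster run on the task-level losses
  L_t(g). Its posterior pi_(t+1) is the Gibbs measure with density exp (- eta * sum_(s<=t) L_s) / Z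
  relative to pi_1, so the normalising constants Z_t telescope: by Hoeffding's lemma each ratio
  Z_(t+1) / Z_t is at most exp (- eta * E_(pi_t) L_t + eta^2 C^2 / 8). The Donsker-Varadhan
  inequality bounds ln Z_T from below by - eta * E_rho (sum_t L_t) - KL(rho, pi_1) for every rho.
  Comparing the two bounds and using L_t(g) <= inf_h (empirical loss of h o g) + beta(g, m_t)
  gives the theorem.
*)

lemma (in prob_space) integral_pos:
  fixes f :: "'a \<Rightarrow> real"
  assumes f: "integrable M f" and pos: "\<And>x. x \<in> space M \<Longrightarrow> 0 < f x"
  shows "0 < integral\<^sup>L M f"
proof -
  have nonneg: "AE x in M. 0 \<le> f x" using pos by (auto intro!: AE_I2 less_imp_le)
  have "integral\<^sup>L M f \<noteq> 0"
  proof
    assume "integral\<^sup>L M f = 0"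
    then have "AE x in M. f x = 0" using integral_nonneg_eq_0_iff_AE[OF f nonneg] by simp
    then have "AE x in M. False" using AE_space by eventually_elim (use pos in fastforce)
    then show False by simp
  qed
  moreover have "0 \<le> integral\<^sup>L M f" using nonneg by (rule integral_nonneg_AE)
  ultimately show ?thesis by simp
qed

lemma Donsker_Varadhan_inequality:
  fixes \<pi> \<rho> :: "'a measure" and f :: "'a \<Rightarrow> real"
  assumes pi: "prob_space \<pi>" and rho: "prob_space \<rho>" and sets: "sets \<rho> = sets \<pi>"
    and ac: "absolutely_continuous \<pi> \<rho>"
    and int_KL: "integrable \<rho> (entropy_density (exp 1) \<pi> \<rho>)"
    and intf: "integrable \<rho> f" and intexp: "integrable \<pi> (\<lambda>x. exp (f x))"
  shows "(\<integral>x. f x \<partial>\<rho>) - KL_divergence (exp 1) \<pi> \<rho> \<le> ln (\<integral>x. exp (f x) \<partial>\<pi>)"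
proof -
  interpret P: prob_space \<pi> by fact
  interpret R: prob_space \<rho> by fact
  have fm[measurable]: "f \<in> borel_measurable \<pi>"
    using borel_measurable_integrable[OF intf] by (simp add: measurable_cong_sets[OF sets refl])
  define r where "r x = enn2real (RN_deriv \<pi> \<rho> x)" for x
  have rm[measurable]: "r \<in> borel_measurable \<pi>" unfolding r_def by measurable
  have r0: "0 \<le> r x" for x by (simp add: r_def)
  have "AE x in \<pi>. RN_deriv \<pi> \<rho> x \<noteq> \<infinity>"
    by (rule P.RN_deriv_finite[OF _ ac sets]) unfold_locales
  then have "density \<pi> (RN_deriv \<pi> \<rho>) = density \<pi> (\<lambda>x. ennreal (r x))"
    by (intro density_cong) (auto simp: r_def ennreal_enn2real_if elim!: eventually_mono)
  then have dens: "\<rho> = density \<pi> (\<lambda>x. ennreal (r x))"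
    using P.density_RN_deriv[OF ac sets] by simp
  have KL: "KL_divergence (exp 1) \<pi> \<rho> = (\<integral>x. ln (r x) \<partial>\<rho>)"
    by (simp add: KL_divergence_def entropy_density_def r_def comp_def log_def)
  have intln: "integrable \<rho> (\<lambda>x. ln (r x))"
    using int_KL by (simp add: entropy_density_def r_def comp_def log_def)
  define Z where "Z = (\<integral>x. exp (f x) \<partial>\<pi>)"
  have Zpos: "0 < Z" unfolding Z_def by (rule P.integral_pos[OF intexp]) simp
  \<comment> \<open>density of the Gibbs measure exp f / Z w.r.t. rho: the integrand below is ln h \<le> h - 1,
     and h integrates to at most 1\<close>
  define h where "h x = exp (f x) / (Z * r x)" for x
  have hm[measurable]: "h \<in> borel_measurable \<pi>" unfolding h_def by measurable
  have rh: "r x * h x = (if r x = 0 then 0 else exp (f x) / Z)" for x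
    by (simp add: h_def)
  have intrh: "integrable \<pi> (\<lambda>x. r x * h x)"
    by (rule Bochner_Integration.integrable_bound[OF integrable_divide[OF intexp, of Z]])
       (use Zpos in \<open>auto simp: rh intro!: AE_I2\<close>)
  have inth: "integrable \<rho> h"
    unfolding dens by (subst integrable_density) (auto simp: r0 intrh)
  have AE_rpos: "AE x in \<rho>. 0 < r x"
    unfolding dens by (subst AE_density) auto
  have "(\<integral>x. f x \<partial>\<rho>) - KL_divergence (exp 1) \<pi> \<rho> - ln Z = (\<integral>x. f x - ln (r x) - ln Z \<partial>\<rho>)"
    using intf intln by (simp add: KL R.prob_space)
  also have "\<dots> \<le> (\<integral>x. h x - 1 \<partial>\<rho>)"
  proof (rule integral_mono_AE)
    show "integrable \<rho> (\<lambda>x. f x - ln (r x) - ln Z)" using intf intln by auto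
    show "integrable \<rho> (\<lambda>x. h x - 1)" using inth by auto
    show "AE x in \<rho>. f x - ln (r x) - ln Z \<le> h x - 1"
      using AE_rpos
    proof (rule eventually_mono)
      fix x assume rx: "0 < r x"
      have "f x - ln (r x) - ln Z = ln (h x)"
        using rx Zpos by (simp add: h_def ln_div ln_mult)
      also have "\<dots> \<le> h x - 1" by (rule ln_le_minus_one) (use rx Zpos in \<open>simp add: h_def\<close>)
      finally show "f x - ln (r x) - ln Z \<le> h x - 1" .
    qed
  qed
  also have "\<dots> = (\<integral>x. h x \<partial>\<rho>) - 1" using inth by (simp add: R.prob_space)
  also have "(\<integral>x. h x \<partial>\<rho>) = (\<integral>x. r x * h x \<partial>\<pi>)"
    unfolding dens by (subst integral_density) (auto simp: r0)
  also have "(\<integral>x. r x * h x \<partial>\<pi>) \<le> (\<integral>x. exp (f x) / Z \<partial>\<pi>)"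
    by (rule integral_mono[OF intrh]) (auto simp: rh intexp Zpos less_imp_le)
  also have "(\<integral>x. exp (f x) / Z \<partial>\<pi>) = 1" using Zpos by (simp add: Z_def)
  finally show ?thesis by (simp add: Z_def)
qed

lemma KL_divergence_nonneg:
  assumes "prob_space \<pi>" "prob_space \<rho>" "sets \<rho> = sets \<pi>" "absolutely_continuous \<pi> \<rho>"
    and "integrable \<rho> (entropy_density (exp 1) \<pi> \<rho>)"
  shows "0 \<le> KL_divergence (exp 1) \<pi> \<rho>"
proof -
  interpret prob_space \<pi> by fact
  show ?thesis using Donsker_Varadhan_inequality[OF assms, of "\<lambda>_. 0"] by (simp add: prob_space)
qed

lemma (in interval_bounded_random_variable) ln_expectation_exp_le:
  assumes l: "l > 0"
  shows "ln (expectation (\<lambda>x. exp (l * f x))) \<le> l * expectation f + l\<^sup>2 * (b - a)\<^sup>2 / 8"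
proof -
  define E where "E = expectation f"
  have intexp: "integrable M (\<lambda>x. exp (l * f x))"
  proof (rule integrable_const_bound[where B = "exp (l * b)"])
    show "AE x in M. norm (exp (l * f x)) \<le> exp (l * b)"
      using AE_in_interval by eventually_elim (use l in auto)
  qed simp
  have "nn_integral M (\<lambda>x. exp (l * (f x - E))) = ennreal (expectation (\<lambda>x. exp (l * f x)) / exp (l * E))"
    using intexp by (subst nn_integral_eq_integral)
      (auto simp: right_diff_distrib exp_diff)
  then have "expectation (\<lambda>x. exp (l * f x)) / exp (l * E) \<le> exp (l\<^sup>2 * (b - a)\<^sup>2 / 8)"
    using Hoeffdings_lemma_nn_integral[OF l] by (simp add: E_def ennreal_le_iff2 del: ennreal_le_iff)
  moreover have "0 < expectation (\<lambda>x. exp (l * f x))" by (rule integral_pos[OF intexp]) simp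
  ultimately have "ln (expectation (\<lambda>x. exp (l * f x)) / exp (l * E)) \<le> l\<^sup>2 * (b - a)\<^sup>2 / 8"
    using ln_mono by fastforce
  with \<open>0 < expectation (\<lambda>x. exp (l * f x))\<close> show ?thesis
    by (simp add: E_def ln_div)
qed

locale ewa_ll =
  fixes \<pi> :: "'g measure" and \<eta> C :: real and L :: "nat \<Rightarrow> 'g \<Rightarrow> real" and T :: nat
  assumes prior: "prob_space \<pi>" and eta_pos: "\<eta> > 0"
    and measurable_loss: "\<And>t. t < T \<Longrightarrow> L t \<in> borel_measurable \<pi>"
    and loss_bounds: "\<And>t g. t < T \<Longrightarrow> g \<in> space \<pi> \<Longrightarrow> L t g \<in> {0..C}"
begin

interpretation prob_space \<pi> by (rule prior)

definition cum_loss :: "nat \<Rightarrow> 'g \<Rightarrow> real" where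
  "cum_loss t g = (\<Sum>s<t. L s g)"

definition normalizer :: "nat \<Rightarrow> real" where
  "normalizer t = (\<integral>g. exp (- \<eta> * cum_loss t g) \<partial>\<pi>)"

definition gibbs_weight :: "nat \<Rightarrow> 'g \<Rightarrow> real" where
  "gibbs_weight t g = exp (- \<eta> * cum_loss t g) / normalizer t"

lemma measurable_cum_loss: "t \<le> T \<Longrightarrow> cum_loss t \<in> borel_measurable \<pi>"
  unfolding cum_loss_def[abs_def] by (intro borel_measurable_sum) (auto intro: measurable_loss)

lemma cum_loss_bounds:
  assumes "t \<le> T" "g \<in> space \<pi>"
  shows "0 \<le> cum_loss t g" "cum_loss t g \<le> real t * C"
proof -
  show "0 \<le> cum_loss t g"
    unfolding cum_loss_def using loss_bounds assms by (intro sum_nonneg) auto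
  have "cum_loss t g \<le> (\<Sum>s<t. C)"
    unfolding cum_loss_def using loss_bounds assms by (intro sum_mono) auto
  then show "cum_loss t g \<le> real t * C" by simp
qed

lemma integrable_exp_cum_loss: "t \<le> T \<Longrightarrow> integrable \<pi> (\<lambda>g. exp (- \<eta> * cum_loss t g))"
  by (rule integrable_const_bound[where B = 1])
     (use cum_loss_bounds eta_pos measurable_cum_loss in \<open>auto intro!: AE_I2\<close>)

lemma normalizer_pos: "t \<le> T \<Longrightarrow> 0 < normalizer t"
  unfolding normalizer_def by (rule integral_pos[OF integrable_exp_cum_loss]) auto

lemma normalizer_0: "normalizer 0 = 1"
  by (simp add: normalizer_def cum_loss_def prob_space)

lemma measurable_gibbs_weight [measurable]: "t \<le> T \<Longrightarrow> gibbs_weight t \<in> borel_measurable \<pi>"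
  unfolding gibbs_weight_def[abs_def] using measurable_cum_loss by measurable

lemma gibbs_weight_nonneg: "t \<le> T \<Longrightarrow> 0 \<le> gibbs_weight t g"
  using normalizer_pos[of t] by (simp add: gibbs_weight_def)

lemma integral_exp_loss_density_gibbs_weight:
  assumes t: "t < T"
  shows "(\<integral>g. exp (- \<eta> * L t g) \<partial>density \<pi> (gibbs_weight t)) = normalizer (Suc t) / normalizer t"
proof -
  note [measurable] = measurable_loss[OF t]
  have "(\<integral>g. exp (- \<eta> * L t g) \<partial>density \<pi> (gibbs_weight t))
      = (\<integral>g. gibbs_weight t g * exp (- \<eta> * L t g) \<partial>\<pi>)"
    using t by (subst integral_density) (auto simp: gibbs_weight_nonneg)
  also have "\<dots> = (\<integral>g. exp (- \<eta> * cum_loss (Suc t) g) / normalizer t \<partial>\<pi>)"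
    by (intro Bochner_Integration.integral_cong)
       (auto simp: gibbs_weight_def cum_loss_def algebra_simps exp_add[symmetric])
  also have "\<dots> = normalizer (Suc t) / normalizer t" by (simp add: normalizer_def)
  finally show ?thesis .
qed

lemma ewa_post_eq_density: "t \<le> T \<Longrightarrow> ewa_post \<pi> \<eta> L t = density \<pi> (gibbs_weight t)"
proof (induction t)
  case 0
  then show ?case by (simp add: gibbs_weight_def normalizer_0 cum_loss_def density_1)
next
  case (Suc t)
  then have t: "t < T" by simp
  note IH = Suc.IH[OF less_imp_le[OF t]]
  note [measurable] = measurable_loss[OF t]
  define N where "N = normalizer (Suc t) / normalizer t"
  have Zpos: "0 < normalizer t" "0 < normalizer (Suc t)" using normalizer_pos t by auto
  have weight_Suc: "gibbs_weight (Suc t) g = gibbs_weight t g * (exp (- \<eta> * L t g) / N)" for g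
    using Zpos by (simp add: N_def gibbs_weight_def cum_loss_def field_simps exp_add[symmetric])
  have "0 < N" using Zpos by (simp add: N_def)
  have "ewa_post \<pi> \<eta> L (Suc t) = density (density \<pi> (gibbs_weight t)) (\<lambda>g. exp (- \<eta> * L t g) / N)"
    using integral_exp_loss_density_gibbs_weight[OF t] by (simp add: IH N_def)
  also have "\<dots> = density \<pi> (\<lambda>g. ennreal (gibbs_weight t g) * ennreal (exp (- \<eta> * L t g) / N))"
    using t by (intro density_density_eq) auto
  also have "\<dots> = density \<pi> (gibbs_weight (Suc t))"
    using t \<open>0 < N\<close> gibbs_weight_nonneg[of t]
    by (intro density_cong) (auto simp: weight_Suc ennreal_mult[symmetric] intro!: AE_I2)
  finally show ?case .
qed

lemma prob_space_ewa_post: "t \<le> T \<Longrightarrow> prob_space (ewa_post \<pi> \<eta> L t)"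
proof (rule prob_spaceI)
  assume t: "t \<le> T"
  have "emeasure (ewa_post \<pi> \<eta> L t) (space (ewa_post \<pi> \<eta> L t)) = (\<integral>\<^sup>+g. gibbs_weight t g \<partial>\<pi>)"
    using t by (simp add: ewa_post_eq_density emeasure_density)
  also have "\<dots> = ennreal (\<integral>g. gibbs_weight t g \<partial>\<pi>)"
    using t integrable_divide[OF integrable_exp_cum_loss[OF t], of "normalizer t"] normalizer_pos[OF t]
    by (intro nn_integral_eq_integral) (auto simp: gibbs_weight_def[abs_def])
  also have "(\<integral>g. gibbs_weight t g \<partial>\<pi>) = 1"
    using normalizer_pos[OF t] by (simp add: gibbs_weight_def normalizer_def)
  finally show "emeasure (ewa_post \<pi> \<eta> L t) (space (ewa_post \<pi> \<eta> L t)) = 1" by simp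
qed

lemma ln_normalizer_ratio_le:
  assumes t: "t < T"
  shows "ln (normalizer (Suc t) / normalizer t)
    \<le> - \<eta> * (\<integral>g. L t g \<partial>ewa_post \<pi> \<eta> L t) + \<eta>\<^sup>2 * C\<^sup>2 / 8"
proof -
  interpret post: interval_bounded_random_variable "ewa_post \<pi> \<eta> L t" "\<lambda>g. - L t g" "- C" 0
  proof (rule interval_bounded_random_variable.intro)
    show "prob_space (ewa_post \<pi> \<eta> L t)" using t by (simp add: prob_space_ewa_post)
    show "interval_bounded_random_variable_axioms (ewa_post \<pi> \<eta> L t) (\<lambda>g. - L t g) (- C) 0"
      using t measurable_loss[OF t] loss_bounds[OF t]
      by unfold_locales (auto simp: ewa_post_eq_density intro!: AE_I2)
  qed
  show ?thesis
    using post.ln_expectation_exp_le[OF eta_pos]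
      integral_exp_loss_density_gibbs_weight[OF t] ewa_post_eq_density[of t] t
    by simp
qed

lemma ln_normalizer_le:
  "ln (normalizer T) \<le> - \<eta> * (\<Sum>t<T. \<integral>g. L t g \<partial>ewa_post \<pi> \<eta> L t) + real T * (\<eta>\<^sup>2 * C\<^sup>2 / 8)"
proof -
  have "ln (normalizer T) = (\<Sum>t<T. ln (normalizer (Suc t)) - ln (normalizer t))"
    by (subst sum_lessThan_telescope) (simp add: normalizer_0)
  also have "\<dots> = (\<Sum>t<T. ln (normalizer (Suc t) / normalizer t))"
  proof (intro sum.cong refl)
    fix t assume "t \<in> {..<T}"
    then have "0 < normalizer t" "0 < normalizer (Suc t)" by (simp_all add: normalizer_pos)
    then show "ln (normalizer (Suc t)) - ln (normalizer t) = ln (normalizer (Suc t) / normalizer t)"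
      by (simp add: ln_div)
  qed
  also have "\<dots> \<le> (\<Sum>t<T. - \<eta> * (\<integral>g. L t g \<partial>ewa_post \<pi> \<eta> L t) + \<eta>\<^sup>2 * C\<^sup>2 / 8)"
    by (intro sum_mono ln_normalizer_ratio_le) simp
  also have "\<dots> = - \<eta> * (\<Sum>t<T. \<integral>g. L t g \<partial>ewa_post \<pi> \<eta> L t) + real T * (\<eta>\<^sup>2 * C\<^sup>2 / 8)"
    by (simp only: sum.distrib sum_distrib_left[symmetric] sum_constant) simp
  finally show ?thesis .
qed

lemma integrable_cum_loss:
  assumes rho: "prob_space \<rho>" and sets: "sets \<rho> = sets \<pi>"
  shows "integrable \<rho> (cum_loss T)"
proof -
  interpret rho: prob_space \<rho> by (rule rho)
  have "space \<rho> = space \<pi>" using sets by (rule sets_eq_imp_space_eq)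
  moreover have "cum_loss T \<in> borel_measurable \<rho>"
    using measurable_cum_loss[of T] by (simp add: measurable_cong_sets[OF sets refl])
  ultimately show ?thesis
    using cum_loss_bounds[of T] by (intro rho.integrable_const_bound[where B = "real T * C"] AE_I2) auto
qed

lemma average_expected_loss_le:
  assumes rho: "prob_space \<rho>" "sets \<rho> = sets \<pi>"
    and ac: "absolutely_continuous \<pi> \<rho>" and int_KL: "integrable \<rho> (entropy_density (exp 1) \<pi> \<rho>)"
    and T_pos: "0 < T"
  shows "1 / real T * (\<Sum>t<T. \<integral>g. L t g \<partial>ewa_post \<pi> \<eta> L t)
    \<le> (\<integral>g. cum_loss T g \<partial>\<rho>) / T + \<eta> * C\<^sup>2 / 8 + KL_divergence (exp 1) \<pi> \<rho> / (\<eta> * T)"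
proof -
  have "(\<integral>g. - \<eta> * cum_loss T g \<partial>\<rho>) - KL_divergence (exp 1) \<pi> \<rho> \<le> ln (normalizer T)"
    unfolding normalizer_def using integrable_cum_loss[OF rho]
    by (intro Donsker_Varadhan_inequality[OF prior rho ac int_KL] integrable_exp_cum_loss) auto
  with ln_normalizer_le have "\<eta> * (\<Sum>t<T. \<integral>g. L t g \<partial>ewa_post \<pi> \<eta> L t)
      \<le> \<eta> * (\<integral>g. cum_loss T g \<partial>\<rho>) + real T * (\<eta>\<^sup>2 * C\<^sup>2 / 8) + KL_divergence (exp 1) \<pi> \<rho>"
    by simp
  then have "\<eta> * (\<Sum>t<T. \<integral>g. L t g \<partial>ewa_post \<pi> \<eta> L t) / (\<eta> * T)
      \<le> (\<eta> * (\<integral>g. cum_loss T g \<partial>\<rho>) + real T * (\<eta>\<^sup>2 * C\<^sup>2 / 8) + KL_divergence (exp 1) \<pi> \<rho>) / (\<eta> * T)"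
    using eta_pos T_pos by (intro divide_right_mono) auto
  then show ?thesis
    using eta_pos T_pos by (simp add: field_simps power2_eq_square)
qed

lemma average_expected_loss_le_KL_div:
  assumes rho: "prob_space \<rho>" "sets \<rho> = sets \<pi>" and T_pos: "0 < T"
  shows "ennreal (1 / real T * (\<Sum>t<T. \<integral>g. L t g \<partial>ewa_post \<pi> \<eta> L t))
    \<le> ennreal (\<integral>g. cum_loss T g / T \<partial>\<rho>) + ennreal (\<eta> * C\<^sup>2 / 8) + KL_div \<rho> \<pi> / ennreal (\<eta> * T)"
proof (cases "absolutely_continuous \<pi> \<rho> \<and> integrable \<rho> (entropy_density (exp 1) \<pi> \<rho>)")
  case False
  then have "KL_div \<rho> \<pi> = \<top>" unfolding KL_div_def by auto
  then show ?thesis by (simp add: ennreal_top_divide)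
next
  case True
  define K where "K = KL_divergence (exp 1) \<pi> \<rho>"
  have "0 \<le> K" unfolding K_def using True by (intro KL_divergence_nonneg prior rho) auto
  have "space \<rho> = space \<pi>" using rho(2) by (rule sets_eq_imp_space_eq)
  then have "0 \<le> (\<integral>g. cum_loss T g / T \<partial>\<rho>)"
    using cum_loss_bounds[of T] by (intro integral_nonneg_AE AE_I2) simp
  have "ennreal (1 / real T * (\<Sum>t<T. \<integral>g. L t g \<partial>ewa_post \<pi> \<eta> L t))
      \<le> ennreal ((\<integral>g. cum_loss T g / T \<partial>\<rho>) + \<eta> * C\<^sup>2 / 8 + K / (\<eta> * T))"
    using average_expected_loss_le[OF rho] True T_pos by (intro ennreal_leI) (simp add: K_def)
  also have "\<dots> = ennreal (\<integral>g. cum_loss T g / T \<partial>\<rho>) + ennreal (\<eta> * C\<^sup>2 / 8)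
      + ennreal K / ennreal (\<eta> * T)"
    using \<open>0 \<le> (\<integral>g. cum_loss T g / T \<partial>\<rho>)\<close> \<open>0 \<le> K\<close> eta_pos T_pos
    by (simp add: ennreal_plus divide_ennreal)
  also have "ennreal K = KL_div \<rho> \<pi>" using True by (simp add: KL_div_def K_def)
  finally show ?thesis .
qed

end

lemma within_loss_le_best_in_class_add:
  assumes "within_regret loss A H g S \<le> ereal b"
  shows "ereal (within_loss loss A g S) \<le> best_in_class loss H g S + ereal b"
  using assms by (cases "best_in_class loss H g S") (auto simp: within_regret_def)

lemma average_within_loss_le:
  assumes T_pos: "0 < T"
    and regret: "\<And>t. t < T \<Longrightarrow> within_regret loss A H g (S t) \<le> ereal (\<beta> g (length (S t)))"
  shows "ereal ((\<Sum>t<T. within_loss loss A g (S t)) / real T)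
    \<le> 1 / ereal (real T) *
      ((\<Sum>t<T. best_in_class loss H g (S t)) + (\<Sum>t<T. ereal (\<beta> g (length (S t)))))"
proof -
  have "ereal (\<Sum>t<T. within_loss loss A g (S t))
      \<le> (\<Sum>t<T. best_in_class loss H g (S t) + ereal (\<beta> g (length (S t))))"
    unfolding sum_ereal[symmetric] by (intro sum_mono within_loss_le_best_in_class_add regret) simp
  then have "1 / ereal (real T) * ereal (\<Sum>t<T. within_loss loss A g (S t))
      \<le> 1 / ereal (real T) * ((\<Sum>t<T. best_in_class loss H g (S t)) + (\<Sum>t<T. ereal (\<beta> g (length (S t)))))"
    by (intro ereal_mult_left_mono) (simp_all add: sum.distrib)
  then show ?thesis using T_pos by simp
qed

lemma ennreal_integral_le_nn_integral_e2ennreal: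
  fixes f :: "'a \<Rightarrow> real" and G :: "'a \<Rightarrow> ereal"
  assumes f: "integrable M f" and nonneg: "\<And>x. x \<in> space M \<Longrightarrow> 0 \<le> f x"
    and le: "\<And>x. x \<in> space M \<Longrightarrow> ereal (f x) \<le> G x"
  shows "ennreal (\<integral>x. f x \<partial>M) \<le> (\<integral>\<^sup>+x. e2ennreal (G x) \<partial>M)"
proof -
  have "ennreal (\<integral>x. f x \<partial>M) = (\<integral>\<^sup>+x. ennreal (f x) \<partial>M)"
    using f nonneg by (intro nn_integral_eq_integral[symmetric] AE_I2) auto
  also have "\<dots> \<le> (\<integral>\<^sup>+x. e2ennreal (G x) \<partial>M)"
    using e2ennreal_mono[OF le] by (intro nn_integral_mono) simp
  finally show ?thesis .
qed

theorem theorem1: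
  fixes \<pi>1 :: "('x \<Rightarrow> 'z) measure"
    and H :: "('z \<Rightarrow> real) set"
    and loss :: "real \<Rightarrow> 'y \<Rightarrow> real"
    and A :: "('x \<Rightarrow> 'z) \<Rightarrow> ('x \<times> 'y) list \<Rightarrow> 'x \<Rightarrow> real"
    and S :: "nat \<Rightarrow> ('x \<times> 'y) list"
    and T :: nat and \<eta> C :: real
    and \<beta> :: "('x \<Rightarrow> 'z) \<Rightarrow> nat \<Rightarrow> real"
  assumes prior: "prob_space \<pi>1"
    and T_pos: "T > 0"
    and eta_pos: "\<eta> > 0"
    and meas: "\<And>t. t < T \<Longrightarrow> (\<lambda>g. within_loss loss A g (S t)) \<in> borel_measurable \<pi>1"
    and bounded: "\<And>t g. t < T \<Longrightarrow> g \<in> space \<pi>1 \<Longrightarrow>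
                     within_loss loss A g (S t) \<in> {0..C}"
    and regret: "\<And>t g. t < T \<Longrightarrow> g \<in> space \<pi>1 \<Longrightarrow>
                     within_regret loss A H g (S t) \<le> ereal (\<beta> g (length (S t)))"
  shows "ennreal ((1 / real T) * (\<Sum>t<T.
            \<integral>g. within_loss loss A g (S t) \<partial>(ewa_post \<pi>1 \<eta> (\<lambda>t g. within_loss loss A g (S t)) t)))
         \<le> (INF \<rho>\<in>{\<rho>. prob_space \<rho> \<and> sets \<rho> = sets \<pi>1}.
              (\<integral>\<^sup>+ g. e2ennreal ((1 / ereal (real T)) *
                     ((\<Sum>t<T. best_in_class loss H g (S t)) + (\<Sum>t<T. ereal (\<beta> g (length (S t))))))
                 \<partial>\<rho>)
              + ennreal (\<eta> * C\<^sup>2 / 8)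
              + KL_div \<rho> \<pi>1 / ennreal (\<eta> * real T))"
proof (rule INF_greatest, clarify)
  define L where "L = (\<lambda>t g. within_loss loss A g (S t))"
  interpret ewa_ll \<pi>1 \<eta> C L T
    by (rule ewa_ll.intro[OF prior eta_pos]) (use meas bounded in \<open>simp_all add: L_def\<close>)
  fix \<rho> assume rho: "prob_space \<rho>" "sets \<rho> = sets \<pi>1"
  have space: "space \<rho> = space \<pi>1" using rho(2) by (rule sets_eq_imp_space_eq)
  have comparator: "ennreal (\<integral>g. cum_loss T g / T \<partial>\<rho>)
      \<le> (\<integral>\<^sup>+ g. e2ennreal (1 / ereal (real T) *
           ((\<Sum>t<T. best_in_class loss H g (S t)) + (\<Sum>t<T. ereal (\<beta> g (length (S t)))))) \<partial>\<rho>)"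
  proof (rule ennreal_integral_le_nn_integral_e2ennreal)
    show "integrable \<rho> (\<lambda>g. cum_loss T g / T)" using integrable_cum_loss[OF rho] by simp
    fix g assume g: "g \<in> space \<rho>"
    then show "0 \<le> cum_loss T g / T" using cum_loss_bounds[of T g] by (simp add: space)
    show "ereal (cum_loss T g / T) \<le> 1 / ereal (real T) *
        ((\<Sum>t<T. best_in_class loss H g (S t)) + (\<Sum>t<T. ereal (\<beta> g (length (S t)))))"
      unfolding cum_loss_def unfolding L_def
      using g T_pos regret by (intro average_within_loss_le) (auto simp: space)
  qed
  show "ennreal (1 / real T * (\<Sum>t<T. \<integral>g. L t g \<partial>ewa_post \<pi>1 \<eta> L t))
      \<le> (\<integral>\<^sup>+ g. e2ennreal (1 / ereal (real T) *
             ((\<Sum>t<T. best_in_class loss H g (S t)) + (\<Sum>t<T. ereal (\<beta> g (length (S t)))))) \<partial>\<rho>)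
        + ennreal (\<eta> * C\<^sup>2 / 8) + KL_div \<rho> \<pi>1 / ennreal (\<eta> * real T)"
    using average_expected_loss_le_KL_div[OF rho T_pos] comparator
    by (auto elim!: order_trans intro: add_right_mono)
qed

end
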